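(* Under the assumptions of Corollary 1 (namely: $m$ satisfies $D^-M(m)\le0\le D^+M(m)$; condition (B) holds with $a,b$ having finite one-sided limits at $0$; and $|D^+M(m+x)|\ge c|x|$ for all $x\in[-\delta,\delta]$ for some $c,\delta>0$), there exists a deterministic constant $K>0$ such that, with probability one, $$\sup_{k\ge n}|\hat m_k-m|\le K\,n^{-1/2}\sqrt{\log n}\quad\text{for all sufficiently large } n.$$
   Context: Let $(S,\mathcal S,Q)$ be a probability space and $h:S\times\mathbb R\to\mathbb R$ such that $h(\cdot,t)$ is $\mathcal S$-measurable for every $t\in\mathbb R$ and $h(x,\cdot)$ is convex for every $x\in S$. For $f:\mathbb R\to\mathbb R$ convex, $D^+f$ and $D^-f$ denote its right and left derivatives; $D^\pm h(x,t)$ denotes the one-sided derivatives of $h(x,\cdot)$ at $t$. Assume $\int_S|D^+h(x,t)|\,Q(dx)<\infty$ and $\int_S|D^-h(x,t)|\,Q(dx)<\infty$ for all $t\in\mathbb R$. Fix $t_0\in\mathbb R$ and set $M(t):=\int_S (h(x,t)-h(x,t_0))\,Q(dx)$; $M$ is real-valued and convex with $D^\pm M(t)=\int_S D^\pm h(x,t)\,Q(dx)$. Let $X_1,X_2,\dots$ be i.i.d. $S$-valued random variables on a probability space $(\Omega,\mathcal A,\mathbb P)$ with common law $Q$, let $M_n(t):=\frac1n\sum_{i=1}^n (h(X_i,t)-h(X_i,t_0))$, and let $\hat m_n$ be the smallest minimizing point of $M_n$ (assumed to exist; it is a random variable). Boundedness condition (B): for every $x\neq 0$ there are reals $a(x)<b(x)$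 with $a(x)\le D^+h(X_1,m+x)\le b(x)$ almost surely. *)

theory Defs
  imports "HOL-Probability.Probability"
begin

definition right_deriv :: "(real \<Rightarrow> real) \<Rightarrow> real \<Rightarrow> real" where
  "right_deriv f t = Lim (at_right t) (\<lambda>s. (f s - f t) / (s - t))"

definition left_deriv :: "(real \<Rightarrow> real) \<Rightarrow> real \<Rightarrow> real" where
  "left_deriv f t = Lim (at_left t) (\<lambda>s. (f s - f t) / (s - t))"

end

theory Submission
  imports Defs
begin

text \<open>An empirical minimiser exceeds \<open>m + x\<close> only if the sample mean of the right
  derivatives at \<open>m + x\<close> is nonpositive, and it lies at or below \<open>m - x\<close> only if the sample
  mean at \<open>m - x\<close> is nonnegative; this is where convexity enters. The population means at
  \<open>m \<plusminus> x\<close> have modulus at least \<open>c x\<close>, and by condition (B) the summands range over an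
  interval whose width stays below some \<open>B\<close> as \<open>x \<rightarrow> 0\<close>. Hoeffding's inequality therefore bounds
  the probability of \<open>\<bar>mhat n - m\<bar> > x\<close> by \<open>2 exp (-2 n (c x)\<^sup>2 / B\<^sup>2)\<close>, which is \<open>2 / n\<^sup>2\<close> for
  \<open>x = (B / c) sqrt (ln n / n)\<close>. These bounds are summable, so Borel-Cantelli and the eventual
  monotonicity of \<open>sqrt (ln n / n)\<close> give the almost sure bound on the tail supremum.\<close>

definition slope :: "(real \<Rightarrow> real) \<Rightarrow> real \<Rightarrow> real \<Rightarrow> real" where
  "slope f t s = (f s - f t) / (s - t)"

lemma slope_commute: "slope f t s = slope f s t"
  unfolding slope_def by (cases "s = t") (auto simp: field_simps)

lemma convex_on_slope_mono:
  assumes f: "convex_on UNIV f" and "s1 < s2" "s1 \<noteq> t" "s2 \<noteq> t"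
  shows "slope f t s1 \<le> slope f t s2"
proof -
  have swap: "(f s - f t) / (s - t) = (f t - f s) / (t - s)" for s
    by (metis minus_diff_eq minus_divide_divide)
  consider "t < s1" | "s2 < t" | "s1 < t" "t < s2" using assms by linarith
  then show ?thesis
  proof cases
    case 1
    from convex_on_slope_le(1)[OF f _ _ 1 \<open>s1 < s2\<close>] show ?thesis
      unfolding slope_def swap by simp
  next
    case 2
    from convex_on_slope_le(2)[OF f _ _ \<open>s1 < s2\<close> 2] show ?thesis
      by (simp add: slope_def)
  next
    case 3
    from convex_on_slope_le[OF f UNIV_I UNIV_I 3] show ?thesis
      unfolding slope_def swap[of s2] by linarith
  qed
qed

lemma convex_on_bdd_below_slope:
  assumes "convex_on UNIV f"
  shows "bdd_below (slope f t ` {t<..})"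
  by (rule bdd_belowI[where m="slope f t (t - 1)"]) (auto intro!: convex_on_slope_mono[OF assms])

lemma convex_on_bdd_above_slope:
  assumes "convex_on UNIV f"
  shows "bdd_above (slope f t ` {..<t})"
  by (rule bdd_aboveI[where M="slope f t (t + 1)"]) (auto intro!: convex_on_slope_mono[OF assms])

lemma convex_on_right_deriv:
  assumes f: "convex_on UNIV f"
  shows "(slope f t \<longlongrightarrow> right_deriv f t) (at_right t)"
    and "right_deriv f t = Inf (slope f t ` {t<..})"
proof -
  define L where "L = Inf (slope f t ` {t<..})"
  note bdd = convex_on_bdd_below_slope[OF f, of t]
  have lim: "(slope f t \<longlongrightarrow> L) (at_right t)"
  proof (rule order_tendstoI)
    fix y assume "y < L"
    moreover have "L \<le> slope f t s" if "s > t" for s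
      unfolding L_def using bdd that by (auto intro!: cInf_lower)
    ultimately show "eventually (\<lambda>s. y < slope f t s) (at_right t)"
      by (intro eventually_mono[OF eventually_at_right_real[of t "t + 1"]]) (auto intro: less_le_trans)
  next
    fix y assume "L < y"
    then obtain s0 where s0: "s0 > t" "slope f t s0 < y"
      unfolding L_def using cInf_less_iff[OF _ bdd] by auto
    show "eventually (\<lambda>s. slope f t s < y) (at_right t)"
      using eventually_at_right_real[OF s0(1)]
    proof eventually_elim
      case (elim s)
      then have "slope f t s \<le> slope f t s0" by (intro convex_on_slope_mono[OF f]) auto
      with s0 show ?case by simp
    qed
  qed
  then have "right_deriv f t = L"
    unfolding right_deriv_def slope_def[abs_def] by (intro tendsto_Lim) auto
  with lim show "(slope f t \<longlongrightarrow> right_deriv f t) (at_right t)"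
    and "right_deriv f t = Inf (slope f t ` {t<..})" by (simp_all add: L_def)
qed

lemma convex_on_left_deriv:
  assumes f: "convex_on UNIV f"
  shows "left_deriv f t = Sup (slope f t ` {..<t})"
proof -
  define L where "L = Sup (slope f t ` {..<t})"
  note bdd = convex_on_bdd_above_slope[OF f, of t]
  have "(slope f t \<longlongrightarrow> L) (at_left t)"
  proof (rule order_tendstoI)
    fix y assume "L < y"
    moreover have "slope f t s \<le> L" if "s < t" for s
      unfolding L_def using bdd that by (auto intro!: cSup_upper)
    ultimately show "eventually (\<lambda>s. slope f t s < y) (at_left t)"
      by (intro eventually_mono[OF eventually_at_left_real[of "t - 1" t]]) force+
  next
    fix y assume "y < L"
    then obtain s0 where s0: "s0 < t" "y < slope f t s0"
      unfolding L_def using less_cSup_iff[OF _ bdd] by auto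
    show "eventually (\<lambda>s. y < slope f t s) (at_left t)"
      using eventually_at_left_real[OF s0(1)]
    proof eventually_elim
      case (elim s)
      then have "slope f t s0 \<le> slope f t s" by (intro convex_on_slope_mono[OF f]) auto
      with s0 show ?case by simp
    qed
  qed
  then show ?thesis
    unfolding left_deriv_def slope_def[abs_def] L_def by (intro tendsto_Lim) auto
qed

lemma convex_on_right_deriv_le_slope:
  assumes f: "convex_on UNIV f" and "t < s"
  shows "right_deriv f t \<le> slope f t s"
  using convex_on_bdd_below_slope[OF f, of t] assms(2)
  unfolding convex_on_right_deriv(2)[OF f] by (auto intro!: cInf_lower)

lemma convex_on_slope_le_right_deriv:
  assumes f: "convex_on UNIV f" and "s < t"
  shows "slope f t s \<le> right_deriv f t"
  unfolding convex_on_right_deriv(2)[OF f] using assms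
  by (intro cInf_greatest) (auto intro!: convex_on_slope_mono[OF f])

lemma convex_on_slope_le_left_deriv:
  assumes f: "convex_on UNIV f" and "s < t"
  shows "slope f t s \<le> left_deriv f t"
  using convex_on_bdd_above_slope[OF f, of t] assms(2)
  unfolding convex_on_left_deriv[OF f] by (auto intro!: cSup_upper)

lemma convex_on_right_deriv_subgradient:
  assumes f: "convex_on UNIV f"
  shows "f t + right_deriv f t * (s - t) \<le> f s"
proof -
  consider "s = t" | "t < s" | "s < t" by linarith
  then show ?thesis
  proof cases
    case 2
    with convex_on_right_deriv_le_slope[OF f 2] show ?thesis
      by (simp add: slope_def field_simps)
  next
    case 3
    with convex_on_slope_le_right_deriv[OF f 3] show ?thesis
      by (simp add: slope_def divide_le_eq field_simps)
  qed simp
qed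

lemma convex_on_right_deriv_mono:
  assumes f: "convex_on UNIV f" and "t < u"
  shows "right_deriv f t \<le> right_deriv f u"
  using convex_on_right_deriv_le_slope[OF assms] convex_on_slope_le_right_deriv[OF assms]
  by (simp add: slope_commute[of f t u])

lemma convex_on_right_deriv_le_left_deriv:
  assumes f: "convex_on UNIV f" and "t < u"
  shows "right_deriv f t \<le> left_deriv f u"
  using convex_on_right_deriv_le_slope[OF assms] convex_on_slope_le_left_deriv[OF assms]
  by (simp add: slope_commute[of f t u])

lemma convex_on_right_deriv_pos_imp_le:
  assumes f: "convex_on UNIV f" and "0 < right_deriv f t" and "f u \<le> f t"
  shows "u \<le> t"
proof (rule ccontr)
  assume "\<not> u \<le> t"
  with assms(2) have "0 < right_deriv f t * (u - t)" by simp
  with convex_on_right_deriv_subgradient[OF f, of t u] assms(3) show False by linarith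
qed

lemma convex_on_right_deriv_neg_imp_less:
  assumes f: "convex_on UNIV f" and "right_deriv f t < 0" and min: "\<And>s. f u \<le> f s"
  shows "t < u"
proof (rule ccontr)
  assume "\<not> t < u"
  with assms(2) have "0 \<le> right_deriv f t * (u - t)" by (simp add: mult_nonpos_nonpos)
  with convex_on_right_deriv_subgradient[OF f, of t u] have "f t \<le> f u" by linarith
  have "eventually (\<lambda>s. t < s \<and> slope f t s < 0) (at_right t)"
    using order_tendstoD(2)[OF convex_on_right_deriv(1)[OF f] assms(2)] eventually_at_right_less[of t]
    by eventually_elim simp
  then obtain s where "t < s" "slope f t s < 0"
    using eventually_happens[of _ "at_right t"] by auto
  then have "f s < f t" by (simp add: slope_def divide_less_0_iff)
  with \<open>f t \<le> f u\<close> min[of s] show False by linarith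
qed

lemma convex_on_sum_functions:
  assumes "finite I" and "\<And>i. i \<in> I \<Longrightarrow> convex_on UNIV (f i)"
  shows "convex_on UNIV (\<lambda>s. \<Sum>i\<in>I. f i s)"
  using assms by (induction I rule: finite_induct) (auto intro!: convex_on_add simp: convex_on_const)

lemma right_deriv_sum:
  assumes "finite I" and "\<And>i. i \<in> I \<Longrightarrow> convex_on UNIV (f i)"
  shows "right_deriv (\<lambda>s. \<Sum>i\<in>I. f i s) t = (\<Sum>i\<in>I. right_deriv (f i) t)"
proof -
  have "((\<lambda>s. \<Sum>i\<in>I. slope (f i) t s) \<longlongrightarrow> (\<Sum>i\<in>I. right_deriv (f i) t)) (at_right t)"
    by (intro tendsto_sum convex_on_right_deriv(1) assms(2))
  moreover have "(\<Sum>i\<in>I. slope (f i) t s) = ((\<Sum>i\<in>I. f i s) - (\<Sum>i\<in>I. f i t)) / (s - t)" for s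
    by (simp add: slope_def flip: sum_divide_distrib sum_subtractf)
  ultimately show ?thesis
    unfolding right_deriv_def by (intro tendsto_Lim) simp_all
qed

lemma convex_on_right_deriv_growth_sign:
  assumes f: "convex_on UNIV f" and crit: "left_deriv f m \<le> 0" "0 \<le> right_deriv f m"
    and growth: "c * \<bar>x\<bar> \<le> \<bar>right_deriv f (m + x)\<bar>"
  shows "0 < x \<Longrightarrow> c * x \<le> right_deriv f (m + x)"
    and "x < 0 \<Longrightarrow> right_deriv f (m + x) \<le> c * x"
proof -
  assume "0 < x"
  with convex_on_right_deriv_mono[OF f, of m "m + x"] crit(2) growth show "c * x \<le> right_deriv f (m + x)"
    by simp
next
  assume "x < 0"
  with convex_on_right_deriv_le_left_deriv[OF f, of "m + x" m] crit(1) growth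
  show "right_deriv f (m + x) \<le> c * x"
    by simp
qed

lemma eventually_bounded_at_of_one_sided_limits:
  fixes f :: "real \<Rightarrow> real"
  assumes "(f \<longlongrightarrow> l1) (at_left x)" and "(f \<longlongrightarrow> l2) (at_right x)"
  shows "\<exists>B>0. eventually (\<lambda>y. \<bar>f y\<bar> \<le> B) (at x)"
proof (intro exI conjI)
  show "0 < \<bar>l1\<bar> + \<bar>l2\<bar> + 1" by (simp add: add_nonneg_pos)
  have "eventually (\<lambda>y. dist (f y) l1 < 1) (at_left x)" "eventually (\<lambda>y. dist (f y) l2 < 1) (at_right x)"
    using assms by (simp_all add: tendstoD)
  then show "eventually (\<lambda>y. \<bar>f y\<bar> \<le> \<bar>l1\<bar> + \<bar>l2\<bar> + 1) (at x)"
    unfolding eventually_at_split by (auto elim!: eventually_mono simp: dist_real_def)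
qed

lemma sqrt_ln_over_antimono:
  assumes "3 \<le> n" and "n \<le> k"
  shows "sqrt (ln (real k) / real k) \<le> sqrt (ln (real n) / real n)"
proof -
  have "exp 1 \<le> real n" using exp_le assms(1) by linarith
  with assms show ?thesis by (simp add: ln_x_over_x_mono)
qed

lemma filterlim_sqrt_ln_over_at_right_0:
  assumes "0 < K"
  shows "filterlim (\<lambda>n. K * sqrt (ln (real n) / real n)) (at_right 0) sequentially"
proof (rule tendsto_imp_filterlim_at_right)
  have "(\<lambda>n. ln (real n) / real n) \<longlonglongrightarrow> 0"
    using filterlim_compose[OF ln_x_over_x_tendsto_0 filterlim_real_sequentially] .
  then show "(\<lambda>n. K * sqrt (ln (real n) / real n)) \<longlonglongrightarrow> 0"
    using tendsto_mult_right_zero tendsto_real_sqrt by fastforce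
  show "eventually (\<lambda>n. 0 < K * sqrt (ln (real n) / real n)) sequentially"
    using eventually_ge_at_top[of 2] by eventually_elim (simp add: assms ln_gt_zero)
qed

lemma exp_Hoeffding_exponent_mono:
  fixes u \<mu> D B n :: real
  assumes "0 \<le> u" "u \<le> \<bar>\<mu>\<bar>" "0 < D" "D \<le> B" "0 \<le> n"
  shows "exp (-2 * n * \<mu>\<^sup>2 / D\<^sup>2) \<le> exp (-2 * n * u\<^sup>2 / B\<^sup>2)"
proof -
  have "u\<^sup>2 \<le> \<mu>\<^sup>2"
    using power_mono[OF assms(2,1), of 2] by simp
  moreover have "D\<^sup>2 \<le> B\<^sup>2"
    using power_mono[OF assms(4), of 2] assms(3) by simp
  ultimately have "u\<^sup>2 / B\<^sup>2 \<le> \<mu>\<^sup>2 / D\<^sup>2"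
    using assms(3) by (intro frac_le) simp_all
  then have "2 * n * (u\<^sup>2 / B\<^sup>2) \<le> 2 * n * (\<mu>\<^sup>2 / D\<^sup>2)"
    using assms(5) by (intro mult_left_mono) simp_all
  then show ?thesis
    by simp
qed

lemma exp_rate_eq:
  assumes "0 < c" and "0 < B" and "1 \<le> n"
  shows "exp (-2 * real n * (c * (B / c * sqrt (ln (real n) / real n)))\<^sup>2 / B\<^sup>2) = 1 / real n ^ 2"
proof -
  have "-2 * real n * (c * (B / c * sqrt (ln (real n) / real n)))\<^sup>2 / B\<^sup>2 = - (2 * ln (real n))"
    using assms by (simp add: power_mult_distrib)
  also have "exp \<dots> = 1 / real n ^ 2"
    using exp_of_nat_mult[of 2 "ln (real n)"] assms(3) by (simp add: exp_minus divide_inverse)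
  finally show ?thesis .
qed

lemma (in prob_space) AE_eventually_tail_deviation_le:
  fixes Z :: "nat \<Rightarrow> 'a \<Rightarrow> real" and \<epsilon> :: "nat \<Rightarrow> real"
  assumes meas: "eventually (\<lambda>n. Z n \<in> borel_measurable M) sequentially"
    and summable: "summable (\<lambda>n. prob {x\<in>space M. \<epsilon> n < \<bar>Z n x - z\<bar>})"
    and antitone: "eventually (\<lambda>n. \<forall>k\<ge>n. \<epsilon> k \<le> \<epsilon> n) sequentially"
  shows "AE x in M. eventually (\<lambda>n. \<forall>k\<ge>n. \<bar>Z k x - z\<bar> \<le> \<epsilon> n) sequentially"
proof -
  obtain N where N: "\<And>n. N \<le> n \<Longrightarrow> Z n \<in> borel_measurable M"
    using meas by (auto simp: eventually_sequentially)
  define A where "A n = (if N \<le> n then {x\<in>space M. \<epsilon> n < \<bar>Z n x - z\<bar>} else {})" for n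
  have A_events: "A n \<in> events" for n
  proof (cases "N \<le> n")
    case True
    then have [measurable]: "Z n \<in> borel_measurable M" by (rule N)
    from True show ?thesis unfolding A_def by simp measurable
  qed (simp add: A_def)
  have "eventually (\<lambda>n. prob (A n) = prob {x\<in>space M. \<epsilon> n < \<bar>Z n x - z\<bar>}) sequentially"
    using eventually_ge_at_top[of N] by eventually_elim (simp add: A_def)
  with summable have A_summable: "summable (\<lambda>n. prob (A n))"
    by (simp add: summable_cong)
  have "AE x in M. eventually (\<lambda>n. x \<in> space M - A n) sequentially"
    by (rule borel_cantelli_AE1[OF A_events _ A_summable]) (simp add: emeasure_finite less_top[symmetric])
  then show ?thesis
  proof (rule AE_mp, intro AE_I2 impI)
    fix x assume "x \<in> space M" and "eventually (\<lambda>n. x \<in> space M - A n) sequentially"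
    from this(2) eventually_ge_at_top[of N] have "eventually (\<lambda>n. \<bar>Z n x - z\<bar> \<le> \<epsilon> n) sequentially"
      by eventually_elim (auto simp: A_def not_less)
    from antitone eventually_all_ge_at_top[OF this]
    show "eventually (\<lambda>n. \<forall>k\<ge>n. \<bar>Z k x - z\<bar> \<le> \<epsilon> n) sequentially"
    proof eventually_elim
      case (elim n)
      show ?case
      proof (intro allI impI)
        fix k assume "n \<le> k"
        with elim have "\<bar>Z k x - z\<bar> \<le> \<epsilon> k" "\<epsilon> k \<le> \<epsilon> n" by simp_all
        then show "\<bar>Z k x - z\<bar> \<le> \<epsilon> n" by linarith
      qed
    qed
  qed
qed

locale convex_integrand =
  fixes Q :: "'s measure" and h :: "'s \<Rightarrow> real \<Rightarrow> real"
  assumes h_measurable [measurable]: "\<And>t. (\<lambda>x. h x t) \<in> borel_measurable Q"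
    and h_convex: "\<And>x. x \<in> space Q \<Longrightarrow> convex_on UNIV (h x)"
    and integrable_right_deriv: "\<And>t. integrable Q (\<lambda>x. right_deriv (h x) t)"
begin

lemma right_deriv_measurable [measurable]: "(\<lambda>x. right_deriv (h x) t) \<in> borel_measurable Q"
  using integrable_right_deriv by (rule borel_measurable_integrable)

lemma integrable_increment: "integrable Q (\<lambda>x. h x s - h x t)"
proof (rule Bochner_Integration.integrable_bound)
  show "integrable Q (\<lambda>x. \<bar>right_deriv (h x) t * (s - t)\<bar> + \<bar>right_deriv (h x) s * (s - t)\<bar>)"
    by (intro Bochner_Integration.integrable_add integrable_abs integrable_mult_left
        integrable_mult_right integrable_right_deriv)
  show "AE x in Q. norm (h x s - h x t)
          \<le> norm (\<bar>right_deriv (h x) t * (s - t)\<bar> + \<bar>right_deriv (h x) s * (s - t)\<bar>)"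
  proof (rule AE_I2)
    fix x assume "x \<in> space Q"
    note subgradient = convex_on_right_deriv_subgradient[OF h_convex[OF this]]
    have "right_deriv (h x) t * (s - t) \<le> h x s - h x t"
      using subgradient[of t s] by linarith
    moreover have "h x s - h x t \<le> right_deriv (h x) s * (s - t)"
      using subgradient[of s t] by (simp add: algebra_simps)
    ultimately show "norm (h x s - h x t)
          \<le> norm (\<bar>right_deriv (h x) t * (s - t)\<bar> + \<bar>right_deriv (h x) s * (s - t)\<bar>)"
      by (simp add: abs_le_iff) linarith
  qed
qed measurable

lemma integral_increment_diff:
  "(\<integral>x. h x s - h x t0 \<partial>Q) - (\<integral>x. h x t - h x t0 \<partial>Q) = (\<integral>x. h x s - h x t \<partial>Q)"
  by (simp flip: Bochner_Integration.integral_diff[OF integrable_increment integrable_increment])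

lemma convex_on_integral_increment: "convex_on UNIV (\<lambda>t. \<integral>x. h x t - h x t0 \<partial>Q)"
  unfolding convex_on_alt
proof (intro conjI ballI allI impI)
  fix s t u :: real assume u: "0 \<le> u \<and> u \<le> 1"
  have "(\<integral>x. h x (u *\<^sub>R s + (1 - u) *\<^sub>R t) - h x t0 \<partial>Q)
      \<le> (\<integral>x. u * (h x s - h x t0) + (1 - u) * (h x t - h x t0) \<partial>Q)"
  proof (rule integral_mono)
    fix x assume "x \<in> space Q"
    with u have "h x (u *\<^sub>R s + (1 - u) *\<^sub>R t) \<le> u * h x s + (1 - u) * h x t"
      using h_convex unfolding convex_on_alt by blast
    then show "h x (u *\<^sub>R s + (1 - u) *\<^sub>R t) - h x t0 \<le> u * (h x s - h x t0) + (1 - u) * (h x t - h x t0)"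
      by (simp add: algebra_simps)
  qed (use integrable_increment in auto)
  also have "\<dots> = u * (\<integral>x. h x s - h x t0 \<partial>Q) + (1 - u) * (\<integral>x. h x t - h x t0 \<partial>Q)"
    using integrable_increment by simp
  finally show "(\<integral>x. h x (u *\<^sub>R s + (1 - u) *\<^sub>R t) - h x t0 \<partial>Q)
      \<le> u * (\<integral>x. h x s - h x t0 \<partial>Q) + (1 - u) * (\<integral>x. h x t - h x t0 \<partial>Q)" .
qed simp

lemma right_deriv_integral_increment:
  "right_deriv (\<lambda>t. \<integral>x. h x t - h x t0 \<partial>Q) t = (\<integral>x. right_deriv (h x) t \<partial>Q)"
proof -
  let ?M = "\<lambda>t. \<integral>x. h x t - h x t0 \<partial>Q"
  define s where "s k = t + inverse (real (Suc k))" for k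
  have s_gt: "t < s k" and s_le: "s k \<le> t + 1" for k
    by (simp_all add: s_def inverse_le_1_iff)
  have "s \<longlonglongrightarrow> t"
    unfolding s_def using tendsto_add[OF tendsto_const LIMSEQ_inverse_real_of_nat, of t] by simp
  then have s: "filterlim s (at_right t) sequentially"
    by (intro tendsto_imp_filterlim_at_right always_eventually allI s_gt)
  have slope_M: "slope ?M t r = (\<integral>x. slope (h x) t r \<partial>Q)" for r
    by (simp add: slope_def integral_increment_diff)
  have "(\<lambda>k. slope ?M t (s k)) \<longlonglongrightarrow> right_deriv ?M t"
    using filterlim_compose[OF convex_on_right_deriv(1)[OF convex_on_integral_increment] s] .
  then have lim_M: "(\<lambda>k. \<integral>x. slope (h x) t (s k) \<partial>Q) \<longlonglongrightarrow> right_deriv ?M t"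
    unfolding slope_M .
  have slope_one: "slope (h x) t (t + 1) = h x (t + 1) - h x t" for x
    by (simp add: slope_def)
  have "(\<lambda>k. \<integral>x. slope (h x) t (s k) \<partial>Q) \<longlonglongrightarrow> (\<integral>x. right_deriv (h x) t \<partial>Q)"
  proof (rule integral_dominated_convergence[where w="\<lambda>x. \<bar>right_deriv (h x) t\<bar> + \<bar>slope (h x) t (t + 1)\<bar>"])
    show "(\<lambda>x. right_deriv (h x) t) \<in> borel_measurable Q"
      by measurable
    show "(\<lambda>x. slope (h x) t (s k)) \<in> borel_measurable Q" for k
      unfolding slope_def by measurable
    show "integrable Q (\<lambda>x. \<bar>right_deriv (h x) t\<bar> + \<bar>slope (h x) t (t + 1)\<bar>)"
      unfolding slope_one
      by (intro Bochner_Integration.integrable_add integrable_abs integrable_right_deriv integrable_increment)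
    show "AE x in Q. (\<lambda>k. slope (h x) t (s k)) \<longlonglongrightarrow> right_deriv (h x) t"
    proof (rule AE_I2)
      fix x assume "x \<in> space Q"
      from filterlim_compose[OF convex_on_right_deriv(1)[OF h_convex[OF this]] s]
      show "(\<lambda>k. slope (h x) t (s k)) \<longlonglongrightarrow> right_deriv (h x) t" .
    qed
    show "AE x in Q. norm (slope (h x) t (s k)) \<le> \<bar>right_deriv (h x) t\<bar> + \<bar>slope (h x) t (t + 1)\<bar>" for k
    proof (rule AE_I2)
      fix x assume "x \<in> space Q"
      note f = h_convex[OF this]
      have "right_deriv (h x) t \<le> slope (h x) t (s k)"
        using convex_on_right_deriv_le_slope[OF f s_gt] .
      moreover have "slope (h x) t (s k) \<le> slope (h x) t (t + 1)"
      proof (cases "s k = t + 1")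
        case False
        with s_le[of k] s_gt[of k] show ?thesis
          by (intro convex_on_slope_mono[OF f]) simp_all
      qed simp
      ultimately show "norm (slope (h x) t (s k)) \<le> \<bar>right_deriv (h x) t\<bar> + \<bar>slope (h x) t (t + 1)\<bar>"
        by (simp add: abs_le_iff) linarith
    qed
  qed
  with lim_M show ?thesis
    by (rule LIMSEQ_unique)
qed

end

locale convex_M_estimation = convex_integrand Q h + P: prob_space P
  for Q :: "'s measure" and h :: "'s \<Rightarrow> real \<Rightarrow> real" and P :: "'w measure" +
  fixes X :: "nat \<Rightarrow> 'w \<Rightarrow> 's" and mhat :: "nat \<Rightarrow> 'w \<Rightarrow> real"
  assumes X_measurable [measurable]: "\<And>i. X i \<in> measurable P Q"
    and X_indep: "prob_space.indep_vars P (\<lambda>_. Q) X UNIV"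
    and X_distr: "\<And>i. distr P Q (X i) = Q"
    and mhat_argmin: "\<And>n \<omega> t. 1 \<le> n \<Longrightarrow> \<omega> \<in> space P \<Longrightarrow>
                        (\<Sum>i<n. h (X i \<omega>) (mhat n \<omega>)) \<le> (\<Sum>i<n. h (X i \<omega>) t)"
    and mhat_measurable: "\<And>n. 1 \<le> n \<Longrightarrow> mhat n \<in> borel_measurable P"
begin

lemma
  assumes "\<omega> \<in> space P"
  shows convex_on_empirical_sum: "convex_on UNIV (\<lambda>s. \<Sum>i<n. h (X i \<omega>) s)"
    and right_deriv_empirical_sum:
      "right_deriv (\<lambda>s. \<Sum>i<n. h (X i \<omega>) s) t = (\<Sum>i<n. right_deriv (h (X i \<omega>)) t)"
proof -
  have "convex_on UNIV (h (X i \<omega>))" for i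
    using h_convex measurable_space[OF X_measurable assms] .
  then show "convex_on UNIV (\<lambda>s. \<Sum>i<n. h (X i \<omega>) s)"
    and "right_deriv (\<lambda>s. \<Sum>i<n. h (X i \<omega>) s) t = (\<Sum>i<n. right_deriv (h (X i \<omega>)) t)"
    by (simp_all add: convex_on_sum_functions right_deriv_sum)
qed

lemma mhat_le_if_empirical_drift_pos:
  assumes "1 \<le> n" "\<omega> \<in> space P" and "0 < (\<Sum>i<n. right_deriv (h (X i \<omega>)) s)"
  shows "mhat n \<omega> \<le> s"
proof (rule convex_on_right_deriv_pos_imp_le[OF convex_on_empirical_sum[OF assms(2)]])
  show "0 < right_deriv (\<lambda>s. \<Sum>i<n. h (X i \<omega>) s) s"
    using assms(3) by (simp add: right_deriv_empirical_sum[OF assms(2)])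
  show "(\<Sum>i<n. h (X i \<omega>) (mhat n \<omega>)) \<le> (\<Sum>i<n. h (X i \<omega>) s)"
    by (rule mhat_argmin[OF assms(1,2)])
qed

lemma less_mhat_if_empirical_drift_neg:
  assumes "1 \<le> n" "\<omega> \<in> space P" and "(\<Sum>i<n. right_deriv (h (X i \<omega>)) s) < 0"
  shows "s < mhat n \<omega>"
proof (rule convex_on_right_deriv_neg_imp_less[OF convex_on_empirical_sum[OF assms(2)]])
  show "right_deriv (\<lambda>s. \<Sum>i<n. h (X i \<omega>) s) s < 0"
    using assms(3) by (simp add: right_deriv_empirical_sum[OF assms(2)])
  show "(\<Sum>i<n. h (X i \<omega>) (mhat n \<omega>)) \<le> (\<Sum>i<n. h (X i \<omega>) t)" for t
    by (rule mhat_argmin[OF assms(1,2)])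
qed

lemma Hoeffding_sample_mean:
  fixes g :: "'s \<Rightarrow> real"
  assumes g [measurable]: "g \<in> borel_measurable Q"
    and bounded: "AE \<omega> in P. g (X 0 \<omega>) \<in> {lo..hi}" and "lo < hi" and "0 < n"
  shows "0 \<le> (\<integral>z. g z \<partial>Q) \<Longrightarrow> P.prob {\<omega>\<in>space P. (\<Sum>i<n. g (X i \<omega>)) \<le> 0}
           \<le> exp (-2 * real n * (\<integral>z. g z \<partial>Q)\<^sup>2 / (hi - lo)\<^sup>2)"
    and "(\<integral>z. g z \<partial>Q) \<le> 0 \<Longrightarrow> P.prob {\<omega>\<in>space P. 0 \<le> (\<Sum>i<n. g (X i \<omega>))}
           \<le> exp (-2 * real n * (\<integral>z. g z \<partial>Q)\<^sup>2 / (hi - lo)\<^sup>2)"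
proof -
  have distr_g: "distr P borel (\<lambda>\<omega>. g (X i \<omega>)) = distr Q borel g" for i
    using distr_distr[OF g X_measurable[of i]] X_distr[of i] by (simp add: comp_def)
  interpret Hoeffding_ineq_iid P "{..<n}" "\<lambda>i \<omega>. g (X i \<omega>)" "\<lambda>\<omega>. g (X 0 \<omega>)" lo hi "\<integral>z. g z \<partial>Q"
  proof unfold_locales
    show "P.indep_vars (\<lambda>_. borel) (\<lambda>i \<omega>. g (X i \<omega>)) {..<n}"
      using P.indep_vars_subset[OF P.indep_vars_compose2[OF X_indep, of "\<lambda>_. g" "\<lambda>_. borel"]] by simp
    show "distr P borel (\<lambda>\<omega>. g (X i \<omega>)) = distr P borel (\<lambda>\<omega>. g (X 0 \<omega>))" for i
      unfolding distr_g ..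
    show "(\<lambda>\<omega>. g (X 0 \<omega>)) \<in> borel_measurable P"
      by measurable
    show "AE \<omega> in P. g (X 0 \<omega>) \<in> {lo..hi}"
      by (rule bounded)
    show "(\<integral>z. g z \<partial>Q) \<equiv> P.expectation (\<lambda>\<omega>. g (X 0 \<omega>))"
      using integral_distr[OF X_measurable[of 0] g] X_distr[of 0] by simp
  qed simp
  have ne: "{..<n} \<noteq> {}" using \<open>0 < n\<close> by auto
  show "0 \<le> (\<integral>z. g z \<partial>Q) \<Longrightarrow> P.prob {\<omega>\<in>space P. (\<Sum>i<n. g (X i \<omega>)) \<le> 0}
           \<le> exp (-2 * real n * (\<integral>z. g z \<partial>Q)\<^sup>2 / (hi - lo)\<^sup>2)"
    using Hoeffding_ineq_le'[of "\<integral>z. g z \<partial>Q", OF _ \<open>lo < hi\<close> ne] \<open>0 < n\<close> by (simp add: divide_le_0_iff)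
  show "(\<integral>z. g z \<partial>Q) \<le> 0 \<Longrightarrow> P.prob {\<omega>\<in>space P. 0 \<le> (\<Sum>i<n. g (X i \<omega>))}
           \<le> exp (-2 * real n * (\<integral>z. g z \<partial>Q)\<^sup>2 / (hi - lo)\<^sup>2)"
    using Hoeffding_ineq_ge'[of "- (\<integral>z. g z \<partial>Q)", OF _ \<open>lo < hi\<close> ne] \<open>0 < n\<close>
    by (simp add: zero_le_divide_iff)
qed

lemma prob_mhat_above_le:
  assumes "1 \<le> n" and bracket: "AE \<omega> in P. right_deriv (h (X 0 \<omega>)) s \<in> {lo..hi}" "lo < hi"
    and drift: "0 \<le> (\<integral>z. right_deriv (h z) s \<partial>Q)"
  shows "P.prob {\<omega>\<in>space P. s < mhat n \<omega>}
           \<le> exp (-2 * real n * (\<integral>z. right_deriv (h z) s \<partial>Q)\<^sup>2 / (hi - lo)\<^sup>2)"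
proof -
  have [measurable]: "mhat n \<in> borel_measurable P" using mhat_measurable[OF assms(1)] .
  have "P.prob {\<omega>\<in>space P. s < mhat n \<omega>}
      \<le> P.prob {\<omega>\<in>space P. (\<Sum>i<n. right_deriv (h (X i \<omega>)) s) \<le> 0}"
  proof (rule P.finite_measure_mono)
    show "{\<omega>\<in>space P. s < mhat n \<omega>} \<subseteq> {\<omega>\<in>space P. (\<Sum>i<n. right_deriv (h (X i \<omega>)) s) \<le> 0}"
      using mhat_le_if_empirical_drift_pos[OF assms(1)] by (force simp: not_le[symmetric])
  qed measurable
  also have "\<dots> \<le> exp (-2 * real n * (\<integral>z. right_deriv (h z) s \<partial>Q)\<^sup>2 / (hi - lo)\<^sup>2)"
    using Hoeffding_sample_mean(1)[OF right_deriv_measurable bracket] assms(1) drift by simp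
  finally show ?thesis .
qed

lemma prob_mhat_at_most_le:
  assumes "1 \<le> n" and bracket: "AE \<omega> in P. right_deriv (h (X 0 \<omega>)) s \<in> {lo..hi}" "lo < hi"
    and drift: "(\<integral>z. right_deriv (h z) s \<partial>Q) \<le> 0"
  shows "P.prob {\<omega>\<in>space P. mhat n \<omega> \<le> s}
           \<le> exp (-2 * real n * (\<integral>z. right_deriv (h z) s \<partial>Q)\<^sup>2 / (hi - lo)\<^sup>2)"
proof -
  have [measurable]: "mhat n \<in> borel_measurable P" using mhat_measurable[OF assms(1)] .
  have "P.prob {\<omega>\<in>space P. mhat n \<omega> \<le> s}
      \<le> P.prob {\<omega>\<in>space P. 0 \<le> (\<Sum>i<n. right_deriv (h (X i \<omega>)) s)}"
  proof (rule P.finite_measure_mono)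
    show "{\<omega>\<in>space P. mhat n \<omega> \<le> s} \<subseteq> {\<omega>\<in>space P. 0 \<le> (\<Sum>i<n. right_deriv (h (X i \<omega>)) s)}"
      using less_mhat_if_empirical_drift_neg[OF assms(1)] by (force simp: not_le[symmetric])
  qed measurable
  also have "\<dots> \<le> exp (-2 * real n * (\<integral>z. right_deriv (h z) s \<partial>Q)\<^sup>2 / (hi - lo)\<^sup>2)"
    using Hoeffding_sample_mean(2)[OF right_deriv_measurable bracket] assms(1) drift by simp
  finally show ?thesis .
qed

lemma prob_abs_deviation_le:
  assumes "1 \<le> n" "0 < x" "0 \<le> c"
    and drift: "c * x \<le> (\<integral>z. right_deriv (h z) (m + x) \<partial>Q)"
      "(\<integral>z. right_deriv (h z) (m - x) \<partial>Q) \<le> - (c * x)"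
    and bracket: "\<And>y. \<bar>y\<bar> = x \<Longrightarrow> \<exists>lo hi. lo < hi \<and> hi - lo \<le> B \<and>
                     (AE \<omega> in P. right_deriv (h (X 0 \<omega>)) (m + y) \<in> {lo..hi})"
  shows "P.prob {\<omega>\<in>space P. x < \<bar>mhat n \<omega> - m\<bar>} \<le> 2 * exp (-2 * real n * (c * x)\<^sup>2 / B\<^sup>2)"
proof -
  have [measurable]: "mhat n \<in> borel_measurable P" using mhat_measurable[OF assms(1)] .
  have cx: "0 \<le> c * x" using assms(2,3) by simp
  obtain lo hi where up: "lo < hi" "hi - lo \<le> B" "AE \<omega> in P. right_deriv (h (X 0 \<omega>)) (m + x) \<in> {lo..hi}"
    using bracket[of x] \<open>0 < x\<close> by auto
  obtain lo' hi' where down: "lo' < hi'" "hi' - lo' \<le> B"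
      "AE \<omega> in P. right_deriv (h (X 0 \<omega>)) (m - x) \<in> {lo'..hi'}"
    using bracket[of "- x"] \<open>0 < x\<close> by auto
  have "P.prob {\<omega>\<in>space P. m + x < mhat n \<omega>}
      \<le> exp (-2 * real n * (\<integral>z. right_deriv (h z) (m + x) \<partial>Q)\<^sup>2 / (hi - lo)\<^sup>2)"
    using prob_mhat_above_le[OF assms(1) up(3,1)] cx drift(1) by linarith
  also have "\<dots> \<le> exp (-2 * real n * (c * x)\<^sup>2 / B\<^sup>2)"
    by (rule exp_Hoeffding_exponent_mono) (use cx drift(1) up in auto)
  finally have above: "P.prob {\<omega>\<in>space P. m + x < mhat n \<omega>} \<le> exp (-2 * real n * (c * x)\<^sup>2 / B\<^sup>2)" .
  have "P.prob {\<omega>\<in>space P. mhat n \<omega> \<le> m - x}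
      \<le> exp (-2 * real n * (\<integral>z. right_deriv (h z) (m - x) \<partial>Q)\<^sup>2 / (hi' - lo')\<^sup>2)"
    using prob_mhat_at_most_le[OF assms(1) down(3,1)] cx drift(2) by linarith
  also have "\<dots> \<le> exp (-2 * real n * (c * x)\<^sup>2 / B\<^sup>2)"
    by (rule exp_Hoeffding_exponent_mono) (use cx drift(2) down in auto)
  finally have below: "P.prob {\<omega>\<in>space P. mhat n \<omega> \<le> m - x} \<le> exp (-2 * real n * (c * x)\<^sup>2 / B\<^sup>2)" .
  have "P.prob {\<omega>\<in>space P. x < \<bar>mhat n \<omega> - m\<bar>}
      \<le> P.prob ({\<omega>\<in>space P. m + x < mhat n \<omega>} \<union> {\<omega>\<in>space P. mhat n \<omega> \<le> m - x})"
  proof (rule P.finite_measure_mono)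
    show "{\<omega>\<in>space P. x < \<bar>mhat n \<omega> - m\<bar>}
        \<subseteq> {\<omega>\<in>space P. m + x < mhat n \<omega>} \<union> {\<omega>\<in>space P. mhat n \<omega> \<le> m - x}"
      by auto
  qed measurable
  also have "\<dots> \<le> P.prob {\<omega>\<in>space P. m + x < mhat n \<omega>} + P.prob {\<omega>\<in>space P. mhat n \<omega> \<le> m - x}"
    by (rule measure_Un_le) measurable
  finally show ?thesis
    using above below by linarith
qed

lemma eventually_prob_deviation_le:
  assumes "0 < c" "0 < B" "0 < \<delta>"
    and drift: "\<And>x. 0 < x \<Longrightarrow> x \<le> \<delta> \<Longrightarrow> c * x \<le> (\<integral>z. right_deriv (h z) (m + x) \<partial>Q)
                                   \<and> (\<integral>z. right_deriv (h z) (m - x) \<partial>Q) \<le> - (c * x)"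
    and bracket: "eventually (\<lambda>y. \<exists>lo hi. lo < hi \<and> hi - lo \<le> B \<and>
                     (AE \<omega> in P. right_deriv (h (X 0 \<omega>)) (m + y) \<in> {lo..hi})) (at 0)"
  defines "\<epsilon> n \<equiv> B / c * sqrt (ln (real n) / real n)"
  shows "eventually (\<lambda>n. P.prob {\<omega>\<in>space P. \<epsilon> n < \<bar>mhat n \<omega> - m\<bar>} \<le> 2 / real n ^ 2) sequentially"
proof -
  let ?bracket = "\<lambda>y. \<exists>lo hi. lo < hi \<and> hi - lo \<le> B \<and>
                     (AE \<omega> in P. right_deriv (h (X 0 \<omega>)) (m + y) \<in> {lo..hi})"
  from bracket have left: "eventually (\<lambda>y. ?bracket (- y)) (at_right 0)"
    and right: "eventually ?bracket (at_right 0)"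
    unfolding eventually_at_split eventually_at_left_to_right by simp_all
  have "eventually (\<lambda>y. 0 < y \<and> y < \<delta> \<and> ?bracket y \<and> ?bracket (- y)) (at_right 0)"
    using right left eventually_at_right_real[OF \<open>0 < \<delta>\<close>] by eventually_elim simp
  moreover have "filterlim \<epsilon> (at_right 0) sequentially"
    unfolding \<epsilon>_def using assms(1,2) by (intro filterlim_sqrt_ln_over_at_right_0) simp
  ultimately have "eventually (\<lambda>n. 0 < \<epsilon> n \<and> \<epsilon> n < \<delta> \<and> ?bracket (\<epsilon> n) \<and> ?bracket (- \<epsilon> n)) sequentially"
    by (rule eventually_compose_filterlim)
  with eventually_ge_at_top[of 1] show ?thesis
  proof eventually_elim
    case (elim n)
    have "P.prob {\<omega>\<in>space P. \<epsilon> n < \<bar>mhat n \<omega> - m\<bar>} \<le> 2 * exp (-2 * real n * (c * \<epsilon> n)\<^sup>2 / B\<^sup>2)"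
    proof (rule prob_abs_deviation_le)
      fix y assume "\<bar>y\<bar> = \<epsilon> n"
      then have "y = \<epsilon> n \<or> y = - \<epsilon> n" by linarith
      with elim show "?bracket y" by blast
    qed (use elim assms(1) drift[of "\<epsilon> n"] in auto)
    also have "\<dots> = 2 / real n ^ 2"
      using exp_rate_eq[OF assms(1,2) elim(1)] by (simp add: \<epsilon>_def)
    finally show ?case .
  qed
qed

lemma AE_eventually_tail_deviation_le_rate:
  assumes "0 < c" "0 < B" "0 < \<delta>"
    and drift: "\<And>x. 0 < x \<Longrightarrow> x \<le> \<delta> \<Longrightarrow> c * x \<le> (\<integral>z. right_deriv (h z) (m + x) \<partial>Q)
                                   \<and> (\<integral>z. right_deriv (h z) (m - x) \<partial>Q) \<le> - (c * x)"
    and bracket: "eventually (\<lambda>y. \<exists>lo hi. lo < hi \<and> hi - lo \<le> B \<and>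
                     (AE \<omega> in P. right_deriv (h (X 0 \<omega>)) (m + y) \<in> {lo..hi})) (at 0)"
  shows "AE \<omega> in P. eventually
           (\<lambda>n. \<forall>k\<ge>n. \<bar>mhat k \<omega> - m\<bar> \<le> B / c * sqrt (ln (real n) / real n)) sequentially"
proof (rule P.AE_eventually_tail_deviation_le)
  have tail: "eventually (\<lambda>n. P.prob {\<omega>\<in>space P. B / c * sqrt (ln (real n) / real n) < \<bar>mhat n \<omega> - m\<bar>}
      \<le> 2 / real n ^ 2) sequentially"
    using assms by (rule eventually_prob_deviation_le)
  show "eventually (\<lambda>n. mhat n \<in> borel_measurable P) sequentially"
    using eventually_ge_at_top[of 1] by eventually_elim (rule mhat_measurable)
  show "summable (\<lambda>n. P.prob {\<omega>\<in>space P. B / c * sqrt (ln (real n) / real n) < \<bar>mhat n \<omega> - m\<bar>})"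
  proof (rule summable_comparison_test_ev)
    show "eventually (\<lambda>n. norm (P.prob {\<omega>\<in>space P. B / c * sqrt (ln (real n) / real n) < \<bar>mhat n \<omega> - m\<bar>})
        \<le> 2 * inverse (real n ^ 2)) sequentially"
      using tail by eventually_elim (simp add: divide_inverse)
    show "summable (\<lambda>n. 2 * inverse (real n ^ 2) :: real)"
      by (intro summable_mult inverse_power_summable) simp
  qed
  show "eventually (\<lambda>n. \<forall>k\<ge>n. B / c * sqrt (ln (real k) / real k) \<le> B / c * sqrt (ln (real n) / real n))
      sequentially"
    using eventually_ge_at_top[of 3]
  proof eventually_elim
    case (elim n)
    have "0 \<le> B / c" using assms(1,2) by simp
    show ?case
    proof (intro allI impI)
      fix k assume "n \<le> k"
      with elim have "sqrt (ln (real k) / real k) \<le> sqrt (ln (real n) / real n)"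
        by (rule sqrt_ln_over_antimono)
      then show "B / c * sqrt (ln (real k) / real k) \<le> B / c * sqrt (ln (real n) / real n)"
        using \<open>0 \<le> B / c\<close> by (rule mult_left_mono)
    qed
  qed
qed

end

theorem corollary2:
  fixes Q :: "'s measure" and P :: "'w measure"
    and h :: "'s \<Rightarrow> real \<Rightarrow> real"
    and t0 m :: real
    and X :: "nat \<Rightarrow> 'w \<Rightarrow> 's"
    and mhat :: "nat \<Rightarrow> 'w \<Rightarrow> real"
    and a b :: "real \<Rightarrow> real"
    and c \<delta> :: real
  defines "M \<equiv> (\<lambda>t. \<integral>x. (h x t - h x t0) \<partial>Q)"
  defines "Mn \<equiv> (\<lambda>n \<omega> t. (1 / real n) * (\<Sum>i<n. h (X i \<omega>) t - h (X i \<omega>) t0))"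
  assumes Q_prob: "prob_space Q"
    and h_meas: "\<And>t. (\<lambda>x. h x t) \<in> borel_measurable Q"
    and h_convex: "\<And>x. x \<in> space Q \<Longrightarrow> convex_on UNIV (h x)"
    and int_right: "\<And>t. integrable Q (\<lambda>x. right_deriv (h x) t)"
    and int_left: "\<And>t. integrable Q (\<lambda>x. left_deriv (h x) t)"
    and P_prob: "prob_space P"
    and X_meas: "\<And>i. X i \<in> measurable P Q"
    and X_indep: "prob_space.indep_vars P (\<lambda>_. Q) X UNIV"
    and X_law: "\<And>i. distr P Q (X i) = Q"
    and mhat_min: "\<And>n \<omega> t. n \<ge> 1 \<Longrightarrow> \<omega> \<in> space P \<Longrightarrow> Mn n \<omega> (mhat n \<omega>) \<le> Mn n \<omega> t"
    and mhat_smallest: "\<And>n \<omega> t. n \<ge> 1 \<Longrightarrow> \<omega> \<in> space P \<Longrightarrow>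
                          (\<forall>s. Mn n \<omega> t \<le> Mn n \<omega> s) \<Longrightarrow> mhat n \<omega> \<le> t"
    and mhat_meas: "\<And>n. n \<ge> 1 \<Longrightarrow> mhat n \<in> borel_measurable P"
    and m_crit: "left_deriv M m \<le> 0" "0 \<le> right_deriv M m"
    and condB: "\<And>x. x \<noteq> 0 \<Longrightarrow> a x < b x \<and>
                   (AE \<omega> in P. a x \<le> right_deriv (h (X 0 \<omega>)) (m + x)
                               \<and> right_deriv (h (X 0 \<omega>)) (m + x) \<le> b x)"
    and a_lim: "\<exists>l. (a \<longlongrightarrow> l) (at_left 0)" "\<exists>l. (a \<longlongrightarrow> l) (at_right 0)"
    and b_lim: "\<exists>l. (b \<longlongrightarrow> l) (at_left 0)" "\<exists>l. (b \<longlongrightarrow> l) (at_right 0)"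
    and c_pos: "c > 0" and \<delta>_pos: "\<delta> > 0"
    and growth: "\<And>x. x \<in> {-\<delta>..\<delta>} \<Longrightarrow> \<bar>right_deriv M (m + x)\<bar> \<ge> c * \<bar>x\<bar>"
  shows "\<exists>K>0. AE \<omega> in P. eventually
           (\<lambda>n. \<forall>k\<ge>n. \<bar>mhat k \<omega> - m\<bar> \<le> K * sqrt (ln (real n)) / sqrt (real n)) sequentially"
proof -
  have argmin: "(\<Sum>i<n. h (X i \<omega>) (mhat n \<omega>)) \<le> (\<Sum>i<n. h (X i \<omega>) t)"
    if "1 \<le> n" "\<omega> \<in> space P" for n \<omega> t
    using mhat_min[OF that, of t] that by (simp add: Mn_def sum_subtractf divide_le_cancel)
  interpret convex_M_estimation Q h P X mhat
    unfolding convex_M_estimation_def convex_M_estimation_axioms_def convex_integrand_def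
    using h_meas h_convex int_right P_prob X_meas X_indep X_law argmin mhat_meas by blast
  have M_convex: "convex_on UNIV M"
    unfolding M_def by (rule convex_on_integral_increment)
  have drift: "c * x \<le> (\<integral>z. right_deriv (h z) (m + x) \<partial>Q)
      \<and> (\<integral>z. right_deriv (h z) (m - x) \<partial>Q) \<le> - (c * x)" if "0 < x" "x \<le> \<delta>" for x
    using convex_on_right_deriv_growth_sign[OF M_convex m_crit growth, of x]
      convex_on_right_deriv_growth_sign[OF M_convex m_crit growth, of "- x"] that
    by (simp add: M_def right_deriv_integral_increment)
  obtain la1 la2 lb1 lb2 where "(a \<longlongrightarrow> la1) (at_left 0)" "(a \<longlongrightarrow> la2) (at_right 0)"
      "(b \<longlongrightarrow> lb1) (at_left 0)" "(b \<longlongrightarrow> lb2) (at_right 0)"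
    using a_lim b_lim by blast
  from eventually_bounded_at_of_one_sided_limits[OF tendsto_diff[OF this(3,1)] tendsto_diff[OF this(4,2)]]
  obtain B where "0 < B" and width: "eventually (\<lambda>y. \<bar>b y - a y\<bar> \<le> B) (at 0)"
    by blast
  from eventually_neq_at_within[of 0 0 UNIV] width
  have "eventually (\<lambda>y. \<exists>lo hi. lo < hi \<and> hi - lo \<le> B \<and>
                     (AE \<omega> in P. right_deriv (h (X 0 \<omega>)) (m + y) \<in> {lo..hi})) (at 0)"
    by eventually_elim (use condB in \<open>fastforce\<close>)
  from AE_eventually_tail_deviation_le_rate[OF c_pos \<open>0 < B\<close> \<delta>_pos drift this] \<open>0 < B\<close> c_pos
  show ?thesis
    by (intro exI[of _ "B / c"]) (simp add: real_sqrt_divide)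
qed

end
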